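(* Let $p(0,N):=\frac{1}{2+a\varphi_N}$, $k(N):=\lfloor N/\sqrt{\log N}\rfloor$, and for $w\in\mathbb W$ let $S(w):=\max_{0\le n\le\tau_0(w)}w(n)$. Then, in $\mathbb P^{p(0,N)}_{k(N)}$-probability as $N\to\infty$, $$\max_{0\le n<\sigma_{S(W)}(W)}\big(\log_N S(W)-\log_N W(n)\big)\to0$$ and $$\max_{S(W)\ge k>0}\ \max_{\sigma_k(W)\le n<\sigma_{k-1}(W)}\big(\log_N k-\log_N W(n)\big)\to0.$$
   Context: $a>0$ and $0<\varphi_N\le1$. Let $\mathbb W$ be the set of integer sequences $w=(w(0),w(1),\dots)$ with $w(n+1)-w(n)\in\{-1,1\}$. For $p\in(0,1)$ and $k\in\mathbb Z$, $\mathbb P_k^p$ is the law on $\mathbb W$ of the simple random walk $W$ with $W(0)=k$ stepping $+1$ with probability $p$ and $-1$ with probability $1-p$. For $k\in\mathbb N_0$, $\tau_k(w):=\min\{n\in\mathbb N_0: w(n)=k\}$, and $\sigma_k(w):=\max\{n\in\mathbb N_0: w(n)=k,\ w(j)\ge1\text{ for all }j\in\{0,\dots,n-1\}\}$ is the time of the last visit of $k$ before $w$ hits $0$ (so $\sigma_0=\tau_0$). $\log_N x=\log x/\log N$. *)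

theory Defs
  imports "HOL-Probability.Probability"
begin

definition step_space :: "real \<Rightarrow> (nat \<Rightarrow> bool) measure" where
  "step_space p = PiM UNIV (\<lambda>_. measure_pmf (bernoulli_pmf p))"

definition walk_of :: "int \<Rightarrow> (nat \<Rightarrow> bool) \<Rightarrow> nat \<Rightarrow> int" where
  "walk_of k \<xi> n = k + (\<Sum>i<n. if \<xi> i then 1 else -1)"

definition rw_law :: "real \<Rightarrow> int \<Rightarrow> (nat \<Rightarrow> int) measure" where
  "rw_law p k = distr (step_space p) (PiM UNIV (\<lambda>_. count_space UNIV)) (walk_of k)"

definition tau :: "int \<Rightarrow> (nat \<Rightarrow> int) \<Rightarrow> nat" where
  "tau k w = (LEAST n. w n = k)"

definition sigma :: "int \<Rightarrow> (nat \<Rightarrow> int) \<Rightarrow> nat" where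
  "sigma k w = (GREATEST n. w n = k \<and> (\<forall>j<n. w j \<ge> 1))"

definition Smax :: "(nat \<Rightarrow> int) \<Rightarrow> int" where
  "Smax w = Max {w n | n. n \<le> tau 0 w}"

definition logN :: "nat \<Rightarrow> real \<Rightarrow> real" where
  "logN N x = ln x / ln (real N)"

definition p0N :: "real \<Rightarrow> (nat \<Rightarrow> real) \<Rightarrow> nat \<Rightarrow> real" where
  "p0N a \<phi> N = 1 / (2 + a * \<phi> N)"

definition kN :: "nat \<Rightarrow> int" where
  "kN N = \<lfloor>real N / sqrt (ln (real N))\<rfloor>"

end

theory Submission
  imports Defs
begin

(* For p = p(0,N) < 1/2 the walk is a supermartingale until it is absorbed at 0, and it is
   absorbed almost surely: while it stays positive, the exponential supermartingale
   (sqrt((1-p)/p))^W decays by the factor 2 sqrt(p(1-p)) < 1 per step.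
   Either event can only fail if, before absorption, the walk rises from some level y to a level
   above y N^eps: before sigma_S it returns from W(n) to the maximum S, and between sigma_k and
   sigma_(k-1) it returns from W(n) to k - 1. By optional stopping, a walk that has been at height
   at most h reaches height H before 0 with probability at most h/H. Sorting the starting level y
   into the dyadic scales 2^j with j <= 2 log_2 N, every scale costs at most 4 N^-eps, and a start
   above N^2 is reached from k(N) <= N with probability at most 1/N. So the failure probability is
   O(log N N^-eps) + 1/N. *)

lemma Ex_le_Suc2: "(\<exists>i\<le>Suc n. P i) \<longleftrightarrow> P 0 \<or> (\<exists>i\<le>n. P (Suc i))"
  unfolding less_Suc_eq_le[symmetric] by (rule Ex_less_Suc2)

lemma All_le_Suc2: "(\<forall>i\<le>Suc n. P i) \<longleftrightarrow> P 0 \<and> (\<forall>i\<le>n. P (Suc i))"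
  unfolding less_Suc_eq_le[symmetric] by (rule All_less_Suc2)

lemma Collect_finitely_determined_in_sets_PiM:
  fixes P :: "(nat \<Rightarrow> 'a::countable) \<Rightarrow> bool"
  assumes "\<And>w w'. \<forall>i\<le>T. w i = w' i \<Longrightarrow> P w \<Longrightarrow> P w'"
  shows "{w. P w} \<in> sets (PiM UNIV (\<lambda>_. count_space UNIV))"
proof -
  define V where "V = (\<lambda>w. restrict w {..T}) ` {w. P w}"
  have "V \<subseteq> PiE {..T} (\<lambda>_. UNIV)"
    unfolding V_def by (intro image_subsetI) (simp add: restrict_PiE_iff)
  then have "countable V"
    by (rule countable_subset) (rule countable_PiE, auto)
  have "{w. P w} = {w. \<exists>v\<in>V. \<forall>i\<le>T. w i = v i}"
  proof (intro set_eqI iffI)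
    fix w assume "w \<in> {w. \<exists>v\<in>V. \<forall>i\<le>T. w i = v i}"
    then obtain u where "P u" "\<forall>i\<le>T. w i = restrict u {..T} i"
      unfolding V_def by auto
    then show "w \<in> {w. P w}"
      using assms[of u w] by auto
  qed (auto simp: V_def intro!: bexI[of _ "restrict _ {..T}"])
  moreover have "Measurable.pred (PiM UNIV (\<lambda>_. count_space UNIV)) (\<lambda>w. \<exists>v\<in>V. \<forall>i\<le>T. w i = v i)"
    using \<open>countable V\<close> by measurable
  ultimately show ?thesis
    by (simp add: pred_def space_PiM)
qed

section \<open>Walks driven by coin tosses\<close>

lemma space_step_space [simp]: "space (step_space p) = UNIV"
  unfolding step_space_def by (simp add: space_PiM)

lemma sets_step_space: "sets (step_space p) = sets (PiM UNIV (\<lambda>_. count_space UNIV))"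
  unfolding step_space_def by (rule sets_PiM_cong) (auto simp: sets_measure_pmf_count_space)

lemma prob_space_step_space: "prob_space (step_space p)"
  unfolding step_space_def by (intro prob_space_PiM prob_space_measure_pmf)

lemma measure_step_space_first_step:
  assumes p: "0 \<le> p" "p \<le> 1" and F: "\<And>b. {\<xi>. F b \<xi>} \<in> sets (step_space p)"
  shows "measure (step_space p) {\<xi>. F (\<xi> 0) (\<lambda>n. \<xi> (Suc n))}
     = p * measure (step_space p) {\<xi>. F True \<xi>} + (1 - p) * measure (step_space p) {\<xi>. F False \<xi>}"
proof -
  define M where "M = measure_pmf (bernoulli_pmf p)"
  interpret sequence_space M
    unfolding sequence_space_def product_prob_space_def product_sigma_finite_def
      product_prob_space_axioms_def M_def
    by (auto simp: prob_space_measure_pmf prob_space_imp_sigma_finite)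
  have S: "step_space p = S"
    by (simp add: step_space_def M_def)
  have [simp]: "space M = UNIV" "space S = UNIV"
    by (simp_all add: M_def space_PiM)
  have FS: "{\<xi>. F b \<xi>} \<in> sets S" for b
    using F by (simp add: S)
  define A where "A = {\<xi>. F (\<xi> 0) (\<lambda>n. \<xi> (Suc n))}"
  define f where "f = (\<lambda>(s::bool, \<omega>). case_nat s \<omega>)"
  have f: "f \<in> measurable (M \<Otimes>\<^sub>M S) S"
    unfolding f_def by measurable
  have pairs_in_sets: "{(s, \<omega>). F s \<omega>} \<in> sets (M \<Otimes>\<^sub>M S)"
  proof -
    have "{(s, \<omega>). F s \<omega>} = (\<Union>b. {b} \<times> {\<omega>. F b \<omega>})"
      by auto
    then show ?thesis
      using FS by (auto simp: M_def intro!: pair_measureI)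
  qed
  have "(\<lambda>\<xi>. (\<xi> 0, \<lambda>n. \<xi> (Suc n))) \<in> measurable S (M \<Otimes>\<^sub>M S)"
  proof (rule measurable_Pair)
    show "(\<lambda>\<xi>. \<xi> 0) \<in> measurable S M"
      by (rule measurable_component_singleton) simp
    show "(\<lambda>\<xi> n. \<xi> (Suc n)) \<in> measurable S S"
      by (rule measurable_PiM_single') auto
  qed
  from measurable_sets[OF this pairs_in_sets] have A: "A \<in> sets S"
    by (simp add: A_def vimage_def)
  have pairs: "f -` A \<inter> space (M \<Otimes>\<^sub>M S) = {(s, \<omega>). F s \<omega>}"
    unfolding A_def f_def by (auto simp: space_pair_measure)
  have iter: "distr (M \<Otimes>\<^sub>M S) S f = S"
    using PiM_iter by (simp add: f_def)
  have "emeasure S A = emeasure (M \<Otimes>\<^sub>M S) {(s, \<omega>). F s \<omega>}"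
    using emeasure_distr[OF f A] by (simp add: iter pairs)
  also have "\<dots> = (\<integral>\<^sup>+s. emeasure S {\<omega>. F s \<omega>} \<partial>M)"
    by (simp add: P.emeasure_pair_measure_alt[OF pairs_in_sets] vimage_def)
  also have "\<dots> = (\<Sum>s\<in>UNIV. emeasure S {\<omega>. F s \<omega>} * pmf (bernoulli_pmf p) s)"
    unfolding M_def by (rule nn_integral_measure_pmf_support) auto
  also have "\<dots> = ennreal (p * measure S {\<xi>. F True \<xi>} + (1 - p) * measure S {\<xi>. F False \<xi>})"
    using p by (simp add: UNIV_bool P.emeasure_eq_measure ennreal_mult' ennreal_plus mult.commute)
  finally have "ennreal (measure S A)
      = ennreal (p * measure S {\<xi>. F True \<xi>} + (1 - p) * measure S {\<xi>. F False \<xi>})"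
    by (simp only: P.emeasure_eq_measure)
  moreover have "0 \<le> p * measure S {\<xi>. F True \<xi>} + (1 - p) * measure S {\<xi>. F False \<xi>}"
    using p by simp
  ultimately show ?thesis
    unfolding S A_def[symmetric] by (metis ennreal_inj measure_nonneg)
qed

definition step_of :: "bool \<Rightarrow> int" where
  "step_of b = (if b then 1 else -1)"

lemma walk_of_0 [simp]: "walk_of k \<xi> 0 = k"
  by (simp add: walk_of_def)

lemma walk_of_Suc: "walk_of k \<xi> (Suc n) = walk_of k \<xi> n + step_of (\<xi> n)"
  by (simp add: walk_of_def step_of_def)

lemma walk_of_Suc_shift: "walk_of k \<xi> (Suc n) = walk_of (k + step_of (\<xi> 0)) (\<lambda>i. \<xi> (Suc i)) n"
  unfolding walk_of_def step_of_def sum.lessThan_Suc_shift by simp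

lemma walk_of_cong: "(\<And>j. j < n \<Longrightarrow> \<xi> j = \<xi>' j) \<Longrightarrow> walk_of k \<xi> n = walk_of k \<xi>' n"
  unfolding walk_of_def by (auto intro!: sum.cong)

lemma measurable_walk_of_at [measurable]:
  "(\<lambda>\<xi>. walk_of k \<xi> n) \<in> measurable (step_space p) (count_space UNIV)"
proof -
  have "{\<xi>. walk_of k \<xi> n = a} \<in> sets (step_space p)" for a
    unfolding sets_step_space
    by (rule Collect_finitely_determined_in_sets_PiM[of n]) (metis walk_of_cong less_imp_le)
  then show ?thesis
    unfolding measurable_count_space_eq2_countable by (simp add: vimage_def)
qed

lemma measurable_walk_of: "walk_of k \<in> measurable (step_space p) (PiM UNIV (\<lambda>_. count_space UNIV))"
  by (rule measurable_PiM_single') (auto simp: space_PiM)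

lemma space_rw_law [simp]: "space (rw_law p k) = UNIV"
  by (simp add: rw_law_def space_PiM)

lemma prob_space_rw_law: "prob_space (rw_law p k)"
  unfolding rw_law_def
  by (intro prob_space.prob_space_distr prob_space_step_space measurable_walk_of)

lemma measure_rw_law:
  "A \<in> sets (PiM UNIV (\<lambda>_. count_space UNIV)) \<Longrightarrow>
    measure (rw_law p k) A = measure (step_space p) (walk_of k -` A)"
  unfolding rw_law_def by (simp add: measure_distr[OF measurable_walk_of])

section \<open>Paths with unit steps\<close>

definition unit_steps :: "(nat \<Rightarrow> int) \<Rightarrow> bool" where
  "unit_steps w \<longleftrightarrow> (\<forall>i. \<bar>w (Suc i) - w i\<bar> \<le> 1)"

lemma unit_steps_walk_of: "unit_steps (walk_of k \<xi>)"
  by (simp add: unit_steps_def walk_of_Suc step_of_def)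

lemma unit_steps_hits_between:
  assumes "unit_steps w" "a \<le> b" "c \<le> w a" "w b \<le> c"
  shows "\<exists>i. a \<le> i \<and> i \<le> b \<and> w i = c"
  using assms(2,4)
proof (induction b rule: dec_induct)
  case base
  then show ?case
    using assms(3) by auto
next
  case (step m)
  show ?case
  proof (cases "w m \<le> c")
    case True
    then show ?thesis
      using step.IH le_SucI by blast
  next
    case False
    with step.prems assms(1) have "w (Suc m) = c"
      unfolding unit_steps_def by (smt (verit))
    then show ?thesis
      using step.hyps by (intro exI[of _ "Suc m"]) auto
  qed
qed

lemma unit_steps_positive_if_avoids_zero:
  assumes "unit_steps w" "1 \<le> w 0" "\<forall>n. w n \<noteq> 0"
  shows "1 \<le> w n"
  using unit_steps_hits_between[OF assms(1), of 0 n 0] assms(2,3) by force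

lemma tau_eqI: "w t = k \<Longrightarrow> (\<And>i. i < t \<Longrightarrow> w i \<noteq> k) \<Longrightarrow> tau k w = t"
  unfolding tau_def by (rule Least_equality) (auto simp: not_less[symmetric])

lemma tau_hit: "\<exists>n. w n = k \<Longrightarrow> w (tau k w) = k"
  unfolding tau_def by (rule LeastI_ex)

lemma positive_before_tau_zero:
  assumes "unit_steps w" "1 \<le> w 0" "\<exists>n. w n = 0" "i < tau 0 w"
  shows "1 \<le> w i"
proof (rule ccontr)
  assume "\<not> 1 \<le> w i"
  then obtain j where "j \<le> i" "w j = 0"
    using unit_steps_hits_between[OF assms(1), of 0 i 0] assms(2) by auto
  have "tau 0 w \<le> j"
    unfolding tau_def using \<open>w j = 0\<close> by (rule Least_le)
  with \<open>j \<le> i\<close> assms(4) show False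
    by simp
qed

lemma Smax_eq_Max_image: "Smax w = Max (w ` {..tau 0 w})"
  unfolding Smax_def by (rule arg_cong[where f = Max]) auto

lemma Smax_attained: "\<exists>n\<le>tau 0 w. w n = Smax w"
proof -
  have "Smax w \<in> w ` {..tau 0 w}"
    unfolding Smax_eq_Max_image by (rule Max_in) auto
  then show ?thesis
    by auto
qed

lemma le_Smax: "n \<le> tau 0 w \<Longrightarrow> w n \<le> Smax w"
  unfolding Smax_eq_Max_image by (rule Max_ge) auto

lemma sigma_visit:
  assumes "w t = 0" "w n = c" "\<forall>j<n. 1 \<le> w j"
  shows "w (sigma c w) = c" "\<forall>j<sigma c w. 1 \<le> w j" "sigma c w \<le> t"
proof -
  define P where "P n \<longleftrightarrow> w n = c \<and> (\<forall>j<n. 1 \<le> w j)" for n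
  have bounded: "m \<le> t" if "P m" for m
  proof (rule ccontr)
    assume "\<not> m \<le> t"
    with that have "1 \<le> w t"
      by (simp add: P_def)
    with assms(1) show False
      by simp
  qed
  have "P (Greatest P)"
    using assms(2,3) bounded by (intro GreatestI_nat[of P n t]) (auto simp: P_def)
  moreover have "sigma c w = Greatest P"
    unfolding sigma_def P_def ..
  ultimately show "w (sigma c w) = c" "\<forall>j<sigma c w. 1 \<le> w j" "sigma c w \<le> t"
    using bounded by (auto simp: P_def)
qed

lemma sigma_visit_below_Smax:
  assumes "unit_steps w" "1 \<le> w 0" "\<exists>n. w n = 0" "0 \<le> c" "c \<le> Smax w"
  shows "w (sigma c w) = c" "\<forall>j<sigma c w. 1 \<le> w j"
proof -
  obtain n0 where "n0 \<le> tau 0 w" "w n0 = Smax w"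
    using Smax_attained by blast
  moreover have zero: "w (tau 0 w) = 0"
    using assms(3) by (rule tau_hit)
  ultimately obtain n where "n \<le> tau 0 w" "w n = c"
    using unit_steps_hits_between[OF assms(1), of n0 "tau 0 w" c] assms(4,5) by auto
  moreover have "\<forall>j<n. 1 \<le> w j"
    using positive_before_tau_zero[OF assms(1-3)] \<open>n \<le> tau 0 w\<close> by simp
  ultimately show "w (sigma c w) = c" "\<forall>j<sigma c w. 1 \<le> w j"
    using sigma_visit[of w "tau 0 w" n c] zero by blast+
qed

section \<open>Climbing before absorption\<close>

(* The flag s marks a visit to heights <= h as already made; it keeps the event stable under the
   first-step decomposition climbs_Suc. *)
definition climbs :: "int \<Rightarrow> int \<Rightarrow> nat \<Rightarrow> int \<Rightarrow> bool \<Rightarrow> (nat \<Rightarrow> bool) \<Rightarrow> bool" where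
  "climbs h H T x s \<xi> \<longleftrightarrow> (\<exists>m\<le>T. (s \<or> (\<exists>n\<le>m. walk_of x \<xi> n \<le> h)) \<and>
     H \<le> walk_of x \<xi> m \<and> (\<forall>i<m. 1 \<le> walk_of x \<xi> i))"

lemma pred_climbs [measurable]: "Measurable.pred (step_space p) (\<lambda>\<xi>. climbs h H T x s \<xi>)"
  unfolding climbs_def by measurable

lemma climbs_in_sets: "{\<xi>. climbs h H T x s \<xi>} \<in> sets (step_space p)"
  using pred_climbs by (simp add: pred_def)

lemma ever_climbs_in_sets: "{\<xi>. \<exists>T. climbs h H T x s \<xi>} \<in> sets (step_space p)"
  unfolding Collect_ex_eq by (intro sets.countable_UN) (auto intro: climbs_in_sets)

lemma climbs_Suc:
  "climbs h H (Suc T) x s \<xi> \<longleftrightarrow> (s \<or> x \<le> h) \<and> H \<le> x \<or>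
     1 \<le> x \<and> climbs h H T (x + step_of (\<xi> 0)) (s \<or> x \<le> h) (\<lambda>n. \<xi> (Suc n))"
proof -
  let ?w = "walk_of x \<xi>" and ?w' = "walk_of (x + step_of (\<xi> 0)) (\<lambda>n. \<xi> (Suc n))"
  have shift: "?w (Suc n) = ?w' n" for n
    by (rule walk_of_Suc_shift)
  have "(s \<or> (\<exists>n\<le>Suc m. ?w n \<le> h)) \<and> H \<le> ?w (Suc m) \<and> (\<forall>i<Suc m. 1 \<le> ?w i) \<longleftrightarrow>
      1 \<le> x \<and> ((s \<or> x \<le> h) \<or> (\<exists>n\<le>m. ?w' n \<le> h)) \<and> H \<le> ?w' m \<and> (\<forall>i<m. 1 \<le> ?w' i)" for m
    unfolding Ex_le_Suc2 All_less_Suc2 shift by auto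
  then show ?thesis
    unfolding climbs_def Ex_le_Suc2 by auto
qed

lemma climbs_mono: "climbs h H T x s \<xi> \<Longrightarrow> T \<le> T' \<Longrightarrow> climbs h H T' x s \<xi>"
  unfolding climbs_def using le_trans by blast

(* Optional-stopping bound for the supermartingale W (p <= 1/2) stopped on leaving [1, H): h/H
   before the visit to heights <= h, and W/H after it. *)
definition climb_bound :: "int \<Rightarrow> int \<Rightarrow> int \<Rightarrow> bool \<Rightarrow> real" where
  "climb_bound h H x s = (if s \<or> x \<le> h then max 0 x / H else h / H)"

lemma climb_bound_nonneg: "0 \<le> h \<Longrightarrow> 0 < H \<Longrightarrow> 0 \<le> climb_bound h H x s"
  by (simp add: climb_bound_def)

lemma climb_bound_ge_1: "0 < H \<Longrightarrow> (s \<or> x \<le> h) \<and> H \<le> x \<Longrightarrow> 1 \<le> climb_bound h H x s"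
  by (simp add: climb_bound_def)

lemma climb_bound_superharmonic:
  assumes "0 \<le> p" "p \<le> 1/2" "0 \<le> h" "0 < H" "1 \<le> x"
  shows "p * climb_bound h H (x + 1) (s \<or> x \<le> h) + (1 - p) * climb_bound h H (x - 1) (s \<or> x \<le> h)
    \<le> climb_bound h H x s"
proof (cases "s \<or> x \<le> h")
  case True
  then have "p * climb_bound h H (x + 1) (s \<or> x \<le> h) + (1 - p) * climb_bound h H (x - 1) (s \<or> x \<le> h)
      = (x + (2 * p - 1)) / H"
    using assms by (simp add: climb_bound_def add_divide_distrib diff_divide_distrib algebra_simps)
  also have "\<dots> \<le> x / H"
    using assms by (intro divide_right_mono) auto
  finally show ?thesis
    using True assms by (simp add: climb_bound_def)
next
  case False
  then have "climb_bound h H (x + 1) (s \<or> x \<le> h) = h / H"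
    "climb_bound h H (x - 1) (s \<or> x \<le> h) \<le> h / H"
    using assms by (auto simp: climb_bound_def intro!: divide_right_mono)
  then have "p * climb_bound h H (x + 1) (s \<or> x \<le> h) + (1 - p) * climb_bound h H (x - 1) (s \<or> x \<le> h)
      \<le> p * (h / H) + (1 - p) * (h / H)"
    using assms by (intro add_mono mult_left_mono) auto
  also have "\<dots> = (p + (1 - p)) * (h / H)"
    by (rule distrib_right[symmetric])
  also have "\<dots> = climb_bound h H x s"
    using False by (simp add: climb_bound_def)
  finally show ?thesis .
qed

lemma measure_climbs_le:
  assumes p: "0 \<le> p" "p \<le> 1/2" and "0 \<le> h" "0 < H"
  shows "measure (step_space p) {\<xi>. climbs h H T x s \<xi>} \<le> climb_bound h H x s"
proof -
  interpret prob_space "step_space p"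
    by (rule prob_space_step_space)
  have certain: "measure (step_space p) A \<le> climb_bound h H x s" if "(s \<or> x \<le> h) \<and> H \<le> x" for A x s
    using prob_le_1 climb_bound_ge_1[OF \<open>0 < H\<close> that] by (rule order_trans)
  have impossible: "measure (step_space p) {} \<le> climb_bound h H x s" for x s
    using climb_bound_nonneg assms by simp
  show ?thesis
  proof (induction T arbitrary: x s)
    case 0
    show ?case
      using certain impossible by (cases "(s \<or> x \<le> h) \<and> H \<le> x") (simp_all add: climbs_def)
  next
    case (Suc T)
    consider "(s \<or> x \<le> h) \<and> H \<le> x" | "x < 1" | "\<not> ((s \<or> x \<le> h) \<and> H \<le> x)" "1 \<le> x"
      by linarith
    then show ?case
    proof cases
      case 1
      then show ?thesis
        by (rule certain)
    next
      case 2
      then show ?thesis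
        using impossible \<open>0 < H\<close> by (simp add: climbs_Suc)
    next
      case 3
      let ?s = "s \<or> x \<le> h"
      have "measure (step_space p) {\<xi>. climbs h H (Suc T) x s \<xi>}
          = measure (step_space p) {\<xi>. climbs h H T (x + step_of (\<xi> 0)) ?s (\<lambda>n. \<xi> (Suc n))}"
        by (rule arg_cong[where f = "measure (step_space p)"]) (use 3 in \<open>auto simp: climbs_Suc\<close>)
      also have "\<dots> = p * measure (step_space p) {\<xi>. climbs h H T (x + 1) ?s \<xi>}
          + (1 - p) * measure (step_space p) {\<xi>. climbs h H T (x - 1) ?s \<xi>}"
        using measure_step_space_first_step[of p "\<lambda>b. climbs h H T (x + step_of b) ?s"] p climbs_in_sets
        by (simp add: step_of_def)
      also have "\<dots> \<le> p * climb_bound h H (x + 1) ?s + (1 - p) * climb_bound h H (x - 1) ?s"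
        using p by (intro add_mono mult_left_mono Suc.IH) auto
      also have "\<dots> \<le> climb_bound h H x s"
        using 3 assms by (intro climb_bound_superharmonic) auto
      finally show ?thesis .
    qed
  qed
qed

lemma measure_ever_climbs_le:
  assumes "0 \<le> p" "p \<le> 1/2" "0 \<le> h" "0 < H"
  shows "measure (step_space p) {\<xi>. \<exists>T. climbs h H T x False \<xi>} \<le> h / H"
proof -
  interpret prob_space "step_space p"
    by (rule prob_space_step_space)
  have "(\<lambda>T. measure (step_space p) {\<xi>. climbs h H T x False \<xi>})
      \<longlonglongrightarrow> measure (step_space p) (\<Union>T. {\<xi>. climbs h H T x False \<xi>})"
    by (rule finite_Lim_measure_incseq) (auto simp: climbs_in_sets incseq_def intro: climbs_mono)
  moreover have "climb_bound h H x False \<le> h / H"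
    using assms by (auto simp: climb_bound_def intro!: divide_right_mono)
  then have "measure (step_space p) {\<xi>. climbs h H T x False \<xi>} \<le> h / H" for T
    using measure_climbs_le[OF assms, of T x False] by linarith
  ultimately have "measure (step_space p) (\<Union>T. {\<xi>. climbs h H T x False \<xi>}) \<le> h / H"
    by (intro LIMSEQ_le_const2) auto
  then show ?thesis
    by (simp add: Collect_ex_eq)
qed

section \<open>Absorption at zero\<close>

lemma positive_upto_in_sets: "{\<xi>. \<forall>i\<le>T. 1 \<le> walk_of x \<xi> i} \<in> sets (step_space p)"
proof -
  have "Measurable.pred (step_space p) (\<lambda>\<xi>. \<forall>i\<le>T. 1 \<le> walk_of x \<xi> i)"
    by measurable
  then show ?thesis
    by (simp add: pred_def)
qed

lemma positive_upto_Suc: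
  "(\<forall>i\<le>Suc T. 1 \<le> walk_of x \<xi> i) \<longleftrightarrow>
     1 \<le> x \<and> (\<forall>i\<le>T. 1 \<le> walk_of (x + step_of (\<xi> 0)) (\<lambda>n. \<xi> (Suc n)) i)"
  by (simp add: All_le_Suc2 walk_of_Suc_shift)

lemma sqrt_odds_mean:
  assumes "0 < p" "p < 1"
  shows "p * (sqrt (1 - p) / sqrt p) + (1 - p) / (sqrt (1 - p) / sqrt p) = 2 * sqrt p * sqrt (1 - p)"
proof -
  have "p * (sqrt (1 - p) / sqrt p) = p / sqrt p * sqrt (1 - p)"
    "(1 - p) / (sqrt (1 - p) / sqrt p) = (1 - p) / sqrt (1 - p) * sqrt p"
    by simp_all
  then have "p * (sqrt (1 - p) / sqrt p) = sqrt p * sqrt (1 - p)"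
    "(1 - p) / (sqrt (1 - p) / sqrt p) = sqrt p * sqrt (1 - p)"
    using assms by (simp_all add: real_div_sqrt)
  then show ?thesis
    by simp
qed

lemma two_sqrt_mult_lt_1:
  assumes "0 \<le> p" "p \<le> 1" "p \<noteq> 1/2"
  shows "2 * sqrt p * sqrt (1 - p) < 1"
proof -
  have "sqrt p \<noteq> sqrt (1 - p)"
    using assms by simp
  then have "0 < (sqrt p - sqrt (1 - p))\<^sup>2"
    by simp
  also have "\<dots> = 1 - 2 * sqrt p * sqrt (1 - p)"
    using assms by (simp add: power2_eq_square algebra_simps)
  finally show ?thesis
    by simp
qed

lemma measure_positive_upto_le:
  assumes p: "0 < p" "p \<le> 1/2"
  shows "measure (step_space p) {\<xi>. \<forall>i\<le>T. 1 \<le> walk_of x \<xi> i}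
    \<le> (sqrt (1 - p) / sqrt p) powr x * (2 * sqrt p * sqrt (1 - p)) ^ T"
proof -
  interpret prob_space "step_space p"
    by (rule prob_space_step_space)
  define \<beta> where "\<beta> = sqrt (1 - p) / sqrt p"
  define \<rho> where "\<rho> = 2 * sqrt p * sqrt (1 - p)"
  have "0 < \<beta>" "1 \<le> \<beta>" "0 \<le> \<rho>"
    using p by (simp_all add: \<beta>_def \<rho>_def le_divide_eq_1_pos)
  have "measure (step_space p) {\<xi>. \<forall>i\<le>T. 1 \<le> walk_of x \<xi> i} \<le> \<beta> powr x * \<rho> ^ T"
  proof (induction T arbitrary: x)
    case 0
    show ?case
    proof (cases "1 \<le> x")
      case True
      have "measure (step_space p) {\<xi>. \<forall>i\<le>0. 1 \<le> walk_of x \<xi> i} \<le> 1"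
        by (rule prob_le_1)
      also have "1 \<le> \<beta> powr x"
        using True \<open>1 \<le> \<beta>\<close> by (intro ge_one_powr_ge_zero) auto
      finally show ?thesis
        by simp
    next
      case False
      then have "{\<xi>. \<forall>i\<le>0. 1 \<le> walk_of x \<xi> i} = {}"
        by auto
      then show ?thesis
        by simp
    qed
  next
    case (Suc T)
    show ?case
    proof (cases "1 \<le> x")
      case True
      have "measure (step_space p) {\<xi>. \<forall>i\<le>Suc T. 1 \<le> walk_of x \<xi> i}
          = measure (step_space p) {\<xi>. \<forall>i\<le>T. 1 \<le> walk_of (x + step_of (\<xi> 0)) (\<lambda>n. \<xi> (Suc n)) i}"
        using True by (simp add: positive_upto_Suc)
      also have "\<dots> = p * measure (step_space p) {\<xi>. \<forall>i\<le>T. 1 \<le> walk_of (x + 1) \<xi> i}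
          + (1 - p) * measure (step_space p) {\<xi>. \<forall>i\<le>T. 1 \<le> walk_of (x - 1) \<xi> i}"
        using measure_step_space_first_step[of p "\<lambda>b \<xi>. \<forall>i\<le>T. 1 \<le> walk_of (x + step_of b) \<xi> i"]
          p positive_upto_in_sets
        by (simp add: step_of_def)
      also have "\<dots> \<le> p * (\<beta> powr (x + 1) * \<rho> ^ T) + (1 - p) * (\<beta> powr (x - 1) * \<rho> ^ T)"
        using p by (intro add_mono mult_left_mono Suc.IH) auto
      also have "\<dots> = \<beta> powr x * \<rho> ^ T * (p * \<beta> + (1 - p) / \<beta>)"
        using \<open>0 < \<beta>\<close> by (simp add: powr_add powr_diff field_simps)
      also have "p * \<beta> + (1 - p) / \<beta> = \<rho>"
        unfolding \<beta>_def \<rho>_def using p by (intro sqrt_odds_mean) auto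
      finally show ?thesis
        by (simp only: power_Suc2 mult.assoc)
    qed (use \<open>0 \<le> \<rho>\<close> in \<open>simp add: positive_upto_Suc\<close>)
  qed
  then show ?thesis
    by (simp add: \<beta>_def \<rho>_def)
qed

lemma never_hits_zero_in_sets: "{\<xi>. \<forall>n. walk_of x \<xi> n \<noteq> 0} \<in> sets (step_space p)"
proof -
  have "Measurable.pred (step_space p) (\<lambda>\<xi>. \<forall>n. walk_of x \<xi> n \<noteq> 0)"
    by measurable
  then show ?thesis
    by (simp add: pred_def)
qed

lemma measure_never_hits_zero:
  assumes "0 < p" "p < 1/2" "1 \<le> x"
  shows "measure (step_space p) {\<xi>. \<forall>n. walk_of x \<xi> n \<noteq> 0} = 0"
proof -
  interpret prob_space "step_space p"
    by (rule prob_space_step_space)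
  define \<rho> where "\<rho> = 2 * sqrt p * sqrt (1 - p)"
  have "\<rho> < 1"
    unfolding \<rho>_def using assms by (intro two_sqrt_mult_lt_1) auto
  have "measure (step_space p) {\<xi>. \<forall>n. walk_of x \<xi> n \<noteq> 0} \<le> (sqrt (1 - p) / sqrt p) powr x * \<rho> ^ T" for T
  proof -
    have "{\<xi>. \<forall>n. walk_of x \<xi> n \<noteq> 0} \<subseteq> {\<xi>. \<forall>i\<le>T. 1 \<le> walk_of x \<xi> i}"
      using unit_steps_positive_if_avoids_zero[OF unit_steps_walk_of] assms(3) by auto
    then have "measure (step_space p) {\<xi>. \<forall>n. walk_of x \<xi> n \<noteq> 0}
        \<le> measure (step_space p) {\<xi>. \<forall>i\<le>T. 1 \<le> walk_of x \<xi> i}"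
      using positive_upto_in_sets by (rule finite_measure_mono)
    also have "\<dots> \<le> (sqrt (1 - p) / sqrt p) powr x * \<rho> ^ T"
      unfolding \<rho>_def using assms by (intro measure_positive_upto_le) auto
    finally show ?thesis .
  qed
  moreover have "(\<lambda>T. (sqrt (1 - p) / sqrt p) powr x * \<rho> ^ T) \<longlonglongrightarrow> 0"
    using \<open>\<rho> < 1\<close> assms by (intro tendsto_mult_right_zero LIMSEQ_power_zero) (auto simp: \<rho>_def)
  ultimately have "measure (step_space p) {\<xi>. \<forall>n. walk_of x \<xi> n \<noteq> 0} \<le> 0"
    by (intro LIMSEQ_le_const) auto
  then show ?thesis
    by (simp add: measure_le_0_iff)
qed

section \<open>Multiplicative rises\<close>

(* Rounding down counts a return from y to an integer level z > y M - 1 as a rise; between sigma_k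
   and sigma_(k-1) the walk is only known to return to k - 1. *)
definition rises_by :: "real \<Rightarrow> (nat \<Rightarrow> int) \<Rightarrow> bool" where
  "rises_by M w \<longleftrightarrow> (\<exists>n m. n < m \<and> (\<forall>i<m. 1 \<le> w i) \<and> \<lfloor>w n * M\<rfloor> \<le> w m)"

lemma rises_by_if_below_sigma:
  assumes "unit_steps w" "1 \<le> w 0" "\<exists>n. w n = 0" "0 \<le> c" "c \<le> Smax w"
    and "n < sigma c w" "\<lfloor>w n * M\<rfloor> \<le> c"
  shows "rises_by M w"
  unfolding rises_by_def using sigma_visit_below_Smax[OF assms(1-5)] assms(6,7)
  by (intro exI[of _ n] exI[of _ "sigma c w"]) simp

lemma logN_gap_imp_less:
  assumes "2 \<le> N" "0 < y" "0 < k" "\<not> logN N k - logN N y \<le> \<epsilon>"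
  shows "y * N powr \<epsilon> < k"
proof -
  have "0 < ln (real N)"
    using assms(1) by simp
  moreover have "\<epsilon> < (ln k - ln y) / ln N"
    using assms(4) by (simp add: logN_def diff_divide_distrib)
  ultimately have "\<epsilon> * ln N < ln k - ln y"
    by (simp add: pos_less_divide_eq)
  with assms(1-3) have "ln (y * N powr \<epsilon>) < ln k"
    by (simp add: ln_mult ln_powr)
  with assms(1-3) show ?thesis
    by simp
qed

definition log_close_to_peak :: "nat \<Rightarrow> real \<Rightarrow> (nat \<Rightarrow> int) \<Rightarrow> bool" where
  "log_close_to_peak N \<epsilon> w \<longleftrightarrow> (\<forall>n < sigma (Smax w) w.
     logN N (real_of_int (Smax w)) - logN N (real_of_int (w n)) \<le> \<epsilon>)"

definition log_close_to_levels :: "nat \<Rightarrow> real \<Rightarrow> (nat \<Rightarrow> int) \<Rightarrow> bool" where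
  "log_close_to_levels N \<epsilon> w \<longleftrightarrow> (\<forall>k. 0 < k \<and> k \<le> Smax w \<longrightarrow>
     (\<forall>n. sigma k w \<le> n \<and> n < sigma (k - 1) w \<longrightarrow>
        logN N (real_of_int k) - logN N (real_of_int (w n)) \<le> \<epsilon>))"

lemma rises_by_if_not_log_close_to_peak:
  assumes "2 \<le> N" "unit_steps w" "1 \<le> w 0" "\<exists>n. w n = 0" "\<not> log_close_to_peak N \<epsilon> w"
  shows "rises_by (N powr \<epsilon>) w"
proof -
  obtain n where n: "n < sigma (Smax w) w"
    and gap: "\<not> logN N (Smax w) - logN N (w n) \<le> \<epsilon>"
    using assms(5) unfolding log_close_to_peak_def by auto
  have "1 \<le> Smax w"
    using le_Smax[of 0 w] assms(3) by simp
  moreover have "1 \<le> w n"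
    using sigma_visit_below_Smax(2)[OF assms(2-4), of "Smax w"] n \<open>1 \<le> Smax w\<close> by simp
  ultimately have "w n * N powr \<epsilon> < Smax w"
    using logN_gap_imp_less[OF assms(1) _ _ gap] by simp
  then show ?thesis
    using \<open>1 \<le> Smax w\<close> n
    by (intro rises_by_if_below_sigma[OF assms(2-4), of "Smax w" n])
      (simp_all add: floor_le_iff floor_less_iff)
qed

lemma rises_by_if_not_log_close_to_levels:
  assumes "2 \<le> N" "unit_steps w" "1 \<le> w 0" "\<exists>n. w n = 0" "\<not> log_close_to_levels N \<epsilon> w"
  shows "rises_by (N powr \<epsilon>) w"
proof -
  obtain k n where k: "0 < k" "k \<le> Smax w" and n: "n < sigma (k - 1) w"
    and gap: "\<not> logN N k - logN N (w n) \<le> \<epsilon>"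
    using assms(5) unfolding log_close_to_levels_def by auto
  have "1 \<le> w n"
    using sigma_visit_below_Smax(2)[OF assms(2-4), of "k - 1"] n k by simp
  then have "w n * N powr \<epsilon> < k"
    using logN_gap_imp_less[OF assms(1) _ _ gap] k by simp
  then show ?thesis
    using k n by (intro rises_by_if_below_sigma[OF assms(2-4), of "k - 1" n])
      (simp_all add: floor_le_iff floor_less_iff)
qed

lemma hitting_event_in_sets:
  fixes \<Phi> :: "(nat \<Rightarrow> 'a::countable) \<Rightarrow> bool"
  assumes "\<And>t w w'. w t = k \<Longrightarrow> \<forall>i<t. w i \<noteq> k \<Longrightarrow> \<forall>i\<le>B t. w i = w' i \<Longrightarrow> \<Phi> w \<Longrightarrow> \<Phi> w'"
  shows "{w. (\<exists>n. w n = k) \<and> \<Phi> w} \<in> sets (PiM UNIV (\<lambda>_. count_space UNIV))"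
proof -
  have "(\<exists>n. w n = k) \<longleftrightarrow> (\<exists>t. w t = k \<and> (\<forall>i<t. w i \<noteq> k))" for w :: "nat \<Rightarrow> 'a"
    by (rule exists_least_iff)
  then have "{w. (\<exists>n. w n = k) \<and> \<Phi> w} = (\<Union>t. {w. w t = k \<and> (\<forall>i<t. w i \<noteq> k) \<and> \<Phi> w})"
    by auto
  moreover have "{w. w t = k \<and> (\<forall>i<t. w i \<noteq> k) \<and> \<Phi> w} \<in> sets (PiM UNIV (\<lambda>_. count_space UNIV))" for t
  proof (rule Collect_finitely_determined_in_sets_PiM[of "max t (B t)"])
    fix w w' :: "nat \<Rightarrow> 'a"
    assume "\<forall>i\<le>max t (B t). w i = w' i" "w t = k \<and> (\<forall>i<t. w i \<noteq> k) \<and> \<Phi> w"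
    then show "w' t = k \<and> (\<forall>i<t. w' i \<noteq> k) \<and> \<Phi> w'"
      using assms[of w t w'] by simp
  qed
  ultimately show ?thesis
    by auto
qed

lemma sigma_cong_first_zero:
  assumes "w t = 0" "\<forall>i\<le>t. w i = w' i"
  shows "sigma c w' = sigma c w"
proof -
  have "w n = c \<and> (\<forall>j<n. 1 \<le> w j) \<longleftrightarrow> w' n = c \<and> (\<forall>j<n. 1 \<le> w' j)" for n
  proof (cases "n \<le> t")
    case False
    have "\<not> 1 \<le> w t" "\<not> 1 \<le> w' t"
      using assms by simp_all
    moreover have "t < n"
      using False by simp
    ultimately show ?thesis
      by blast
  qed (use assms(2) in auto)
  then show ?thesis
    unfolding sigma_def by simp
qed

(* On a path that does not visit c before 0, sigma c w is the unspecified value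
   (GREATEST n. False); so the events depend on the path up to that index, not just up to t. *)
lemma sigma_le_first_zero_or_undefined:
  assumes "w t = 0"
  shows "sigma c w \<le> max t (GREATEST n::nat. False)"
proof (cases "\<exists>n. w n = c \<and> (\<forall>j<n. 1 \<le> w j)")
  case True
  then obtain m where "w m = c" "\<forall>j<m. 1 \<le> w j"
    by blast
  then have "sigma c w \<le> t"
    using sigma_visit(3) assms by blast
  then show ?thesis
    by simp
next
  case False
  then have "(\<lambda>n. w n = c \<and> (\<forall>j<n. 1 \<le> w j)) = (\<lambda>_. False)"
    by auto
  then show ?thesis
    unfolding sigma_def by simp
qed

lemma agree_upto_first_zero:
  assumes "w t = 0" "\<forall>i<t. w i \<noteq> 0" "\<forall>i\<le>max t (GREATEST n::nat. False). w i = w' i"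
  shows "Smax w' = Smax w" "sigma c w' = sigma c w" "n < sigma c w \<Longrightarrow> w' n = w n"
proof -
  have agree: "\<forall>i\<le>t. w i = w' i"
    using assms(3) by simp
  have "tau 0 w = t" "tau 0 w' = t"
    using assms agree by (auto intro!: tau_eqI)
  with agree show "Smax w' = Smax w"
    unfolding Smax_eq_Max_image by (auto intro!: arg_cong[where f = Max])
  show "sigma c w' = sigma c w"
    using assms(1) agree by (rule sigma_cong_first_zero)
  show "n < sigma c w \<Longrightarrow> w' n = w n"
    using sigma_le_first_zero_or_undefined[of w t c] assms(1,3) by simp
qed

lemma log_close_to_peak_event_in_sets:
  "{w. (\<exists>n. w n = 0) \<and> log_close_to_peak N \<epsilon> w} \<in> sets (PiM UNIV (\<lambda>_. count_space UNIV))"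
proof (rule hitting_event_in_sets[where B = "\<lambda>t. max t (GREATEST n::nat. False)"])
  fix t and w w' :: "nat \<Rightarrow> int"
  assume first_zero: "w t = 0" "\<forall>i<t. w i \<noteq> 0"
    and agree: "\<forall>i\<le>max t (GREATEST n::nat. False). w i = w' i"
    and close: "log_close_to_peak N \<epsilon> w"
  note same = agree_upto_first_zero[OF first_zero agree]
  show "log_close_to_peak N \<epsilon> w'"
    unfolding log_close_to_peak_def same(1,2)
  proof (intro allI impI)
    fix n
    assume "n < sigma (Smax w) w"
    then show "logN N (real_of_int (Smax w)) - logN N (real_of_int (w' n)) \<le> \<epsilon>"
      using close same(3)[of n "Smax w"] unfolding log_close_to_peak_def by simp
  qed
qed

lemma log_close_to_levels_event_in_sets:
  "{w. (\<exists>n. w n = 0) \<and> log_close_to_levels N \<epsilon> w} \<in> sets (PiM UNIV (\<lambda>_. count_space UNIV))"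
proof (rule hitting_event_in_sets[where B = "\<lambda>t. max t (GREATEST n::nat. False)"])
  fix t and w w' :: "nat \<Rightarrow> int"
  assume first_zero: "w t = 0" "\<forall>i<t. w i \<noteq> 0"
    and agree: "\<forall>i\<le>max t (GREATEST n::nat. False). w i = w' i"
    and close: "log_close_to_levels N \<epsilon> w"
  note same = agree_upto_first_zero[OF first_zero agree]
  show "log_close_to_levels N \<epsilon> w'"
    unfolding log_close_to_levels_def same(1,2)
  proof (intro allI impI)
    fix k n
    assume "0 < k \<and> k \<le> Smax w" "sigma k w \<le> n \<and> n < sigma (k - 1) w"
    then show "logN N (real_of_int k) - logN N (real_of_int (w' n)) \<le> \<epsilon>"
      using close same(3)[of n "k - 1"] unfolding log_close_to_levels_def by simp
  qed
qed

section \<open>Dyadic covering of rises\<close>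

lemma exists_dyadic_scale:
  assumes "1 \<le> y" "y \<le> (2::int) ^ J"
  shows "\<exists>j\<le>J. y \<le> 2 ^ j \<and> 2 ^ j < 2 * y"
proof -
  define j where "j = (LEAST j. y \<le> 2 ^ j)"
  have "y \<le> 2 ^ j" "j \<le> J"
    unfolding j_def using assms(2) by (auto intro: LeastI Least_le)
  moreover have "2 ^ j < 2 * y"
  proof (cases j)
    case 0
    then show ?thesis
      using assms(1) by simp
  next
    case (Suc i)
    then have "\<not> y \<le> 2 ^ i"
      using not_less_Least[of i "\<lambda>j. y \<le> 2 ^ j"] unfolding j_def by simp
    then show ?thesis
      using Suc by simp
  qed
  ultimately show ?thesis
    by blast
qed

lemma rises_by_imp_climbs:
  assumes "rises_by M (walk_of x \<xi>)" "0 \<le> M"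
  shows "(\<exists>j\<le>J. \<exists>T. climbs (2 ^ j) \<lfloor>2 ^ j * M / 2\<rfloor> T x False \<xi>)
    \<or> (\<exists>T. climbs x (2 ^ J + 1) T x False \<xi>)"
proof -
  let ?w = "walk_of x \<xi>"
  obtain n m where "n < m" and positive: "\<forall>i<m. 1 \<le> ?w i" and rise: "\<lfloor>?w n * M\<rfloor> \<le> ?w m"
    using assms(1) unfolding rises_by_def by blast
  then have "1 \<le> ?w n"
    by simp
  show ?thesis
  proof (cases "?w n \<le> 2 ^ J")
    case True
    then obtain j where "j \<le> J" "?w n \<le> 2 ^ j" "2 ^ j < 2 * ?w n"
      using exists_dyadic_scale[OF \<open>1 \<le> ?w n\<close>] by blast
    then have "real_of_int (2 ^ j) < real_of_int (2 * ?w n)"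
      by (simp only: of_int_less_iff)
    then have "(2::real) ^ j / 2 \<le> ?w n"
      by simp
    then have "2 ^ j * M / 2 \<le> ?w n * M"
      using mult_right_mono[OF _ assms(2)] by fastforce
    then have "\<lfloor>(2::real) ^ j * M / 2\<rfloor> \<le> ?w m"
      using floor_mono rise order_trans by blast
    moreover have "\<exists>i\<le>m. ?w i \<le> 2 ^ j"
      using \<open>n < m\<close> \<open>?w n \<le> 2 ^ j\<close> by (intro exI[of _ n]) simp
    ultimately have "climbs (2 ^ j) \<lfloor>2 ^ j * M / 2\<rfloor> m x False \<xi>"
      unfolding climbs_def using positive by (intro exI[of _ m]) simp
    then show ?thesis
      using \<open>j \<le> J\<close> by blast
  next
    case False
    then have "climbs x (2 ^ J + 1) n x False \<xi>"
      unfolding climbs_def using \<open>n < m\<close> positive by (intro exI[of _ n]) auto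
    then show ?thesis
      by blast
  qed
qed

lemma floor_half_product_bounds:
  fixes h M :: real
  assumes "1 \<le> h" "4 \<le> M"
  shows "0 < \<lfloor>h * M / 2\<rfloor>" "h / \<lfloor>h * M / 2\<rfloor> \<le> 4 / M"
proof -
  have "2 \<le> h * M / 2"
    using assms mult_mono[of 1 h 4 M] by simp
  then have half: "h * M / 4 \<le> \<lfloor>h * M / 2\<rfloor>"
    by linarith
  with \<open>2 \<le> h * M / 2\<close> show positive: "0 < \<lfloor>h * M / 2\<rfloor>"
    by linarith
  have "h / \<lfloor>h * M / 2\<rfloor> \<le> h / (h * M / 4)"
    using half assms positive by (intro divide_left_mono) auto
  also have "\<dots> = 4 / M"
    using assms by (simp add: field_simps)
  finally show "h / \<lfloor>h * M / 2\<rfloor> \<le> 4 / M" .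
qed

lemma measure_ever_climbs_dyadic_le:
  assumes "0 \<le> p" "p \<le> 1/2" "4 \<le> M"
  shows "measure (step_space p) {\<xi>. \<exists>T. climbs (2 ^ j) \<lfloor>2 ^ j * M / 2\<rfloor> T x False \<xi>} \<le> 4 / M"
proof -
  note floor_bounds = floor_half_product_bounds[of "2 ^ j" M]
  have "measure (step_space p) {\<xi>. \<exists>T. climbs (2 ^ j) \<lfloor>2 ^ j * M / 2\<rfloor> T x False \<xi>}
      \<le> 2 ^ j / \<lfloor>2 ^ j * M / 2\<rfloor>"
    using measure_ever_climbs_le[of p "2 ^ j" "\<lfloor>2 ^ j * M / 2\<rfloor>" x] assms floor_bounds by simp
  also have "\<dots> \<le> 4 / M"
    using floor_bounds assms by simp
  finally show ?thesis .
qed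

lemma measure_misses_zero_or_rises_le:
  assumes p: "0 < p" "p < 1/2" and "1 \<le> x" "4 \<le> M"
  shows "measure (step_space p) {\<xi>. (\<forall>n. walk_of x \<xi> n \<noteq> 0) \<or> rises_by M (walk_of x \<xi>)}
    \<le> (real J + 1) * (4 / M) + x / (2 ^ J + 1)"
proof -
  interpret prob_space "step_space p"
    by (rule prob_space_step_space)
  define never where "never = {\<xi>. \<forall>n. walk_of x \<xi> n \<noteq> 0}"
  define climb_at where "climb_at j = {\<xi>. \<exists>T. climbs (2 ^ j) \<lfloor>2 ^ j * M / 2\<rfloor> T x False \<xi>}" for j :: nat
  define climb_high where "climb_high = {\<xi>. \<exists>T. climbs x (2 ^ J + 1) T x False \<xi>}"
  have never_in_sets: "never \<in> events"
    unfolding never_def by (rule never_hits_zero_in_sets)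
  have climb_in_sets: "climb_at j \<in> events" "climb_high \<in> events" for j
    unfolding climb_at_def climb_high_def by (rule ever_climbs_in_sets)+
  have union_in_sets: "(\<Union>j\<le>J. climb_at j) \<in> events"
    using climb_in_sets by (intro sets.finite_UN) auto
  have "{\<xi>. (\<forall>n. walk_of x \<xi> n \<noteq> 0) \<or> rises_by M (walk_of x \<xi>)}
      \<subseteq> never \<union> (\<Union>j\<le>J. climb_at j) \<union> climb_high"
  proof
    fix \<xi>
    assume "\<xi> \<in> {\<xi>. (\<forall>n. walk_of x \<xi> n \<noteq> 0) \<or> rises_by M (walk_of x \<xi>)}"
    then have "(\<forall>n. walk_of x \<xi> n \<noteq> 0) \<or> (\<exists>j\<le>J. \<exists>T. climbs (2 ^ j) \<lfloor>2 ^ j * M / 2\<rfloor> T x False \<xi>)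
        \<or> (\<exists>T. climbs x (2 ^ J + 1) T x False \<xi>)"
      using rises_by_imp_climbs[of M x \<xi> J] \<open>4 \<le> M\<close> by auto
    then show "\<xi> \<in> never \<union> (\<Union>j\<le>J. climb_at j) \<union> climb_high"
      unfolding never_def climb_at_def climb_high_def by blast
  qed
  then have "measure (step_space p) {\<xi>. (\<forall>n. walk_of x \<xi> n \<noteq> 0) \<or> rises_by M (walk_of x \<xi>)}
      \<le> measure (step_space p) (never \<union> (\<Union>j\<le>J. climb_at j) \<union> climb_high)"
    using never_in_sets climb_in_sets by (intro finite_measure_mono) auto
  also have "\<dots> \<le> measure (step_space p) (never \<union> (\<Union>j\<le>J. climb_at j)) + measure (step_space p) climb_high"
    using never_in_sets union_in_sets climb_in_sets by (intro measure_Un_le sets.Un)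
  also have "\<dots> \<le> measure (step_space p) never + measure (step_space p) (\<Union>j\<le>J. climb_at j)
      + measure (step_space p) climb_high"
    using never_in_sets union_in_sets by (intro add_right_mono measure_Un_le)
  also have "\<dots> \<le> measure (step_space p) never + (\<Sum>j\<le>J. measure (step_space p) (climb_at j))
      + measure (step_space p) climb_high"
    using climb_in_sets by (intro add_mono order_refl finite_measure_subadditive_finite) auto
  also have "\<dots> \<le> 0 + (\<Sum>j\<le>J. 4 / M) + x / (2 ^ J + 1)"
  proof (intro add_mono sum_mono)
    show "measure (step_space p) never \<le> 0"
      unfolding never_def using measure_never_hits_zero assms by simp
    show "measure (step_space p) (climb_at j) \<le> 4 / M" for j
      unfolding climb_at_def using p \<open>4 \<le> M\<close> by (intro measure_ever_climbs_dyadic_le) auto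
    show "measure (step_space p) climb_high \<le> x / (2 ^ J + 1)"
      unfolding climb_high_def using p \<open>1 \<le> x\<close> measure_ever_climbs_le[of p x "2 ^ J + 1"] by simp
  qed
  finally show ?thesis
    by (simp add: ac_simps)
qed

lemma measure_rw_law_ge_if_failures_rise:
  assumes "0 < p" "p < 1/2" "1 \<le> x" "4 \<le> M"
    and G: "G \<in> sets (PiM UNIV (\<lambda>_. count_space UNIV))"
    and fails: "\<And>w. unit_steps w \<Longrightarrow> 1 \<le> w 0 \<Longrightarrow> (\<exists>n. w n = 0) \<Longrightarrow> w \<notin> G \<Longrightarrow> rises_by M w"
  shows "1 - ((real J + 1) * (4 / M) + x / (2 ^ J + 1)) \<le> measure (rw_law p x) G"
proof -
  interpret prob_space "step_space p"
    by (rule prob_space_step_space)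
  define bad where "bad = {\<xi>. (\<forall>n. walk_of x \<xi> n \<noteq> 0) \<or> rises_by M (walk_of x \<xi>)}"
  have "Measurable.pred (step_space p) (\<lambda>\<xi>. (\<forall>n. walk_of x \<xi> n \<noteq> 0) \<or> rises_by M (walk_of x \<xi>))"
    unfolding rises_by_def by measurable
  then have "bad \<in> events"
    by (simp add: pred_def bad_def)
  have preimage: "walk_of x -` G \<in> events"
    using measurable_sets[OF measurable_walk_of G] by simp
  have "UNIV - walk_of x -` G \<subseteq> bad"
  proof
    fix \<xi>
    assume "\<xi> \<in> UNIV - walk_of x -` G"
    then have "walk_of x \<xi> \<notin> G"
      by simp
    then show "\<xi> \<in> bad"
      using fails[OF unit_steps_walk_of] \<open>1 \<le> x\<close> unfolding bad_def
      by (cases "\<exists>n. walk_of x \<xi> n = 0") simp_all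
  qed
  then have "measure (step_space p) (UNIV - walk_of x -` G) \<le> measure (step_space p) bad"
    using \<open>bad \<in> events\<close> by (rule finite_measure_mono)
  also have "\<dots> \<le> (real J + 1) * (4 / M) + x / (2 ^ J + 1)"
    unfolding bad_def by (rule measure_misses_zero_or_rises_le[OF assms(1-4)])
  finally show ?thesis
    using prob_compl[OF preimage] measure_rw_law[OF G] by (simp add: Compl_eq_Diff_UNIV)
qed

section \<open>Asymptotics\<close>

lemma kN_bounds:
  assumes "4 \<le> N"
  shows "1 \<le> kN N" "kN N \<le> N"
proof -
  have "exp 1 \<le> real N"
    using exp_le assms by linarith
  then have "1 \<le> ln (real N)"
    using assms by (subst ln_ge_iff) auto
  then have "1 \<le> sqrt (ln (real N))"
    by simp
  have "real N \<le> (real N)\<^sup>2"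
    using assms by (simp add: power2_eq_square)
  then have "ln (real N) \<le> (real N)\<^sup>2"
    using ln_le_minus_one[of "real N"] assms by linarith
  then have "sqrt (ln (real N)) \<le> real N"
    by (intro real_le_lsqrt) auto
  with \<open>1 \<le> sqrt (ln (real N))\<close> have "1 \<le> real N / sqrt (ln (real N))"
    by simp
  then show "1 \<le> kN N"
    unfolding kN_def by (simp add: le_floor_iff)
  have "real N / sqrt (ln (real N)) \<le> real N"
    using \<open>1 \<le> sqrt (ln (real N))\<close> by (simp add: divide_le_eq mult_le_cancel_left1)
  then show "kN N \<le> N"
    unfolding kN_def by linarith
qed

lemma failure_bound_le:
  fixes N :: nat and x :: int and M :: real
  assumes "4 \<le> N" "0 < M" "x \<le> N"
  defines "J \<equiv> nat \<lceil>2 * log 2 N\<rceil>"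
  shows "(real J + 1) * (4 / M) + x / (2 ^ J + 1) \<le> (2 * log 2 N + 2) * (4 / M) + 1 / N"
proof -
  have "0 \<le> log 2 N"
    using assms by simp
  then have J: "real J = \<lceil>2 * log 2 N\<rceil>"
    unfolding J_def by simp
  then have "real J + 1 \<le> 2 * log 2 N + 2"
    by linarith
  have "real N * real N = (2 powr log 2 N) powr 2"
    using assms by (simp add: powr_numeral power2_eq_square)
  also have "\<dots> = 2 powr (2 * log 2 N)"
    by (simp add: powr_powr mult.commute)
  also have "\<dots> \<le> 2 powr J"
    using J by (intro powr_mono) linarith+
  also have "\<dots> = 2 ^ J"
    by (simp add: powr_realpow)
  finally have "real N * real N \<le> 2 ^ J" .
  then have "x / (2 ^ J + 1) \<le> N / (N * N)"
    using assms by (intro frac_le) auto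
  then have "x / (2 ^ J + 1) \<le> 1 / N"
    using assms by simp
  moreover have "(real J + 1) * (4 / M) \<le> (2 * log 2 N + 2) * (4 / M)"
    using \<open>real J + 1 \<le> 2 * log 2 N + 2\<close> assms by (intro mult_right_mono) auto
  ultimately show ?thesis
    by linarith
qed

lemma failure_bound_tendsto_0:
  assumes "0 < \<epsilon>"
  shows "(\<lambda>N. (2 * log 2 (real N) + 2) * (4 / real N powr \<epsilon>) + 1 / real N) \<longlonglongrightarrow> 0"
proof -
  have "(\<lambda>N. 8 / ln 2 * (ln (real N) / real N powr \<epsilon>) + 8 * (1 / real N powr \<epsilon>) + 1 / real N)
      \<longlonglongrightarrow> 8 / ln 2 * 0 + 8 * 0 + 0"
    using assms by (intro tendsto_intros lim_ln_over_power lim_1_over_real_power lim_const_over_n) auto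
  moreover have "(2 * log 2 (real N) + 2) * (4 / real N powr \<epsilon>) + 1 / real N
      = 8 / ln 2 * (ln (real N) / real N powr \<epsilon>) + 8 * (1 / real N powr \<epsilon>) + 1 / real N" for N
    by (cases "N = 0") (simp_all add: log_def field_simps)
  ultimately show ?thesis
    by simp
qed

lemma p0N_bounds:
  assumes "a > 0" "0 < \<phi> N"
  shows "0 < p0N a \<phi> N" "p0N a \<phi> N < 1/2"
proof -
  have "0 < a * \<phi> N"
    using assms by simp
  then show "0 < p0N a \<phi> N" "p0N a \<phi> N < 1/2"
    by (simp_all add: p0N_def field_simps)
qed

lemma measure_hitting_event_ge:
  fixes \<Phi> :: "(nat \<Rightarrow> int) \<Rightarrow> bool"
  assumes "a > 0" "0 < \<phi> N" "4 \<le> N" "4 \<le> N powr \<epsilon>"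
    and sets: "{w. (\<exists>n. w n = 0) \<and> \<Phi> w} \<in> sets (PiM UNIV (\<lambda>_. count_space UNIV))"
    and fails: "\<And>w. unit_steps w \<Longrightarrow> 1 \<le> w 0 \<Longrightarrow> (\<exists>n. w n = 0) \<Longrightarrow> \<not> \<Phi> w \<Longrightarrow> rises_by (N powr \<epsilon>) w"
  shows "1 - ((2 * log 2 N + 2) * (4 / N powr \<epsilon>) + 1 / N)
    \<le> measure (rw_law (p0N a \<phi> N) (kN N)) {w. (\<exists>n. w n = 0) \<and> \<Phi> w}"
proof -
  let ?J = "nat \<lceil>2 * log 2 N\<rceil>"
  have p: "0 < p0N a \<phi> N" "p0N a \<phi> N < 1/2"
    using p0N_bounds[of a \<phi> N] assms(1,2) by auto
  have "1 - ((real ?J + 1) * (4 / N powr \<epsilon>) + kN N / (2 ^ ?J + 1))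
      \<le> measure (rw_law (p0N a \<phi> N) (kN N)) {w. (\<exists>n. w n = 0) \<and> \<Phi> w}"
  proof (rule measure_rw_law_ge_if_failures_rise[OF p kN_bounds(1) assms(4) sets])
    show "4 \<le> N"
      by (rule assms(3))
    show "rises_by (N powr \<epsilon>) w"
      if "unit_steps w" "1 \<le> w 0" "\<exists>n. w n = 0" "w \<notin> {w. (\<exists>n. w n = 0) \<and> \<Phi> w}" for w
      using fails that by simp
  qed
  moreover have "(real ?J + 1) * (4 / N powr \<epsilon>) + kN N / (2 ^ ?J + 1)
      \<le> (2 * log 2 N + 2) * (4 / N powr \<epsilon>) + 1 / N"
    using assms(3) kN_bounds(2)[of N] by (intro failure_bound_le) simp_all
  ultimately show ?thesis
    by simp
qed

lemma measure_hitting_event_tendsto_1: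
  fixes \<Phi> :: "nat \<Rightarrow> (nat \<Rightarrow> int) \<Rightarrow> bool"
  assumes a: "a > 0" and \<phi>: "\<And>N. 0 < \<phi> N \<and> \<phi> N \<le> 1" and \<epsilon>: "\<epsilon> > 0"
    and sets: "\<And>N. {w. (\<exists>n. w n = 0) \<and> \<Phi> N w} \<in> sets (PiM UNIV (\<lambda>_. count_space UNIV))"
    and fails: "\<And>N w. 2 \<le> N \<Longrightarrow> unit_steps w \<Longrightarrow> 1 \<le> w 0 \<Longrightarrow> (\<exists>n. w n = 0) \<Longrightarrow> \<not> \<Phi> N w
      \<Longrightarrow> rises_by (N powr \<epsilon>) w"
  shows "(\<lambda>N. measure (rw_law (p0N a \<phi> N) (kN N))
    {w \<in> space (rw_law (p0N a \<phi> N) (kN N)). (\<exists>n. w n = 0) \<and> \<Phi> N w}) \<longlonglongrightarrow> 1"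
proof -
  define bound where "bound N = (2 * log 2 (real N) + 2) * (4 / real N powr \<epsilon>) + 1 / real N" for N
  have "\<forall>\<^sub>F N in sequentially. 1 / real N powr \<epsilon> < 1 / 4"
    using lim_1_over_real_power[OF \<epsilon>] by (rule order_tendstoD) simp
  moreover have "\<forall>\<^sub>F N in sequentially. 4 \<le> N"
    by (rule eventually_ge_at_top)
  ultimately have "\<forall>\<^sub>F N in sequentially. 1 - bound N \<le> measure (rw_law (p0N a \<phi> N) (kN N))
      {w \<in> space (rw_law (p0N a \<phi> N) (kN N)). (\<exists>n. w n = 0) \<and> \<Phi> N w}"
  proof eventually_elim
    case (elim N)
    then have "4 \<le> N powr \<epsilon>"
      by (simp add: divide_less_eq)
    have fails_N: "rises_by (N powr \<epsilon>) w"
      if "unit_steps w" "1 \<le> w 0" "\<exists>n. w n = 0" "\<not> \<Phi> N w" for w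
      using fails[of N w] that elim by simp
    have "1 - bound N \<le> measure (rw_law (p0N a \<phi> N) (kN N)) {w. (\<exists>n. w n = 0) \<and> \<Phi> N w}"
      unfolding bound_def
      by (rule measure_hitting_event_ge[OF a _ elim(2) \<open>4 \<le> N powr \<epsilon>\<close> sets fails_N]) (use \<phi> in auto)
    then show ?case
      by simp
  qed
  moreover have "\<forall>\<^sub>F N in sequentially. measure (rw_law (p0N a \<phi> N) (kN N))
      {w \<in> space (rw_law (p0N a \<phi> N) (kN N)). (\<exists>n. w n = 0) \<and> \<Phi> N w} \<le> 1"
    by (intro always_eventually allI prob_space.prob_le_1 prob_space_rw_law)
  moreover have "(\<lambda>N. 1 - bound N) \<longlonglongrightarrow> 1"
    using tendsto_diff[OF tendsto_const failure_bound_tendsto_0[OF \<epsilon>]] by (simp add: bound_def)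
  ultimately show ?thesis
    using tendsto_const by (rule tendsto_sandwich)
qed

theorem lemma4p6:
  fixes a \<epsilon> :: real and \<phi> :: "nat \<Rightarrow> real"
  assumes "a > 0" and "\<And>N. 0 < \<phi> N \<and> \<phi> N \<le> 1" and "\<epsilon> > 0"
  shows "((\<lambda>N. measure (rw_law (p0N a \<phi> N) (kN N))
            {w \<in> space (rw_law (p0N a \<phi> N) (kN N)).
               (\<exists>n. w n = 0) \<and>
               (\<forall>n < sigma (Smax w) w.
                  logN N (real_of_int (Smax w)) - logN N (real_of_int (w n)) \<le> \<epsilon>)})
          \<longlonglongrightarrow> 1) \<and>
         ((\<lambda>N. measure (rw_law (p0N a \<phi> N) (kN N))
            {w \<in> space (rw_law (p0N a \<phi> N) (kN N)).
               (\<exists>n. w n = 0) \<and>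
               (\<forall>k. 0 < k \<and> k \<le> Smax w \<longrightarrow>
                  (\<forall>n. sigma k w \<le> n \<and> n < sigma (k - 1) w \<longrightarrow>
                     logN N (real_of_int k) - logN N (real_of_int (w n)) \<le> \<epsilon>))})
          \<longlonglongrightarrow> 1)"
  using measure_hitting_event_tendsto_1[where \<Phi> = "\<lambda>N. log_close_to_peak N \<epsilon>", OF assms
      log_close_to_peak_event_in_sets rises_by_if_not_log_close_to_peak]
    measure_hitting_event_tendsto_1[where \<Phi> = "\<lambda>N. log_close_to_levels N \<epsilon>", OF assms
      log_close_to_levels_event_in_sets rises_by_if_not_log_close_to_levels]
  unfolding log_close_to_peak_def log_close_to_levels_def by (rule conjI)

end
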